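(* Let $(\mathbf{H},m,\Delta)$ be a self-adjoint poset Hopf monoid. Then its linearization $\mathbf{k}\mathbf{H}$ is commutative and cocommutative.
   Context: $\mathbf{k}$ is a field of characteristic $0$. A (connected) poset species $\mathbf{H}$ assigns to each finite set $I$ a locally finite poset $\mathbf{H}[I]$, $\mathbf{H}[\emptyset]=\{1\}$, and to each bijection an order-preserving bijection, functorially. A poset Hopf monoid $(\mathbf{H},m,\Delta)$ consists of order-preserving maps $m_{S,T}:\mathbf{H}[S]\times\mathbf{H}[T]\to\mathbf{H}[S\sqcup T]$ (natural, associative, unital) and $\Delta_{S,T}:\mathbf{H}[S\sqcup T]\to\mathbf{H}[S]\times\mathbf{H}[T]$ (natural, coassociative, counital), satisfying compatibility: for $I=S_1\sqcup S_2=T_1\sqcup T_2$, $A=S_1\cap T_1$, $B=S_1\cap T_2$, $C=S_2\cap T_1$, $D=S_2\cap T_2$, if $\Delta_{A,B}(x)=(x_A,x_B)$, $\Delta_{C,D}(y)=(y_C,y_D)$ then $\Delta_{T_1,T_2}(m_{S_1,S_2}(x,y))=(m_{A,C}(x_A,y_C),m_{B,D}(x_B,y_D))$. It is self-adjoint if $m_{S,T}$ and $\Delta_{S,T}$ form a Galois connection for all $S,T$ (either $\Delta\dashv m$ or $m\dashv\Delta$). $\mathbf{k}\mathbf{H}$ is the linearization (basis $\mathbf{H}[I]$). A vector space monoid is commutative if $m_{S,T}(x,y)=m_{T,S}(y,x)$; a comonoid is cocommutative if $\Delta_{S,T}=\beta\circ\Delta_{T,S}$ where $\beta$ swaps tensor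 factors. *)

theory Defs
  imports Main
begin

text \<open>H I is the underlying set of the poset H[I]
  (only relevant for finite I), le I is its order, one is the unique element of H[{}],
  and rel s I : H[I] -> H[s`I] is the transport along the bijection s restricted to I.\<close>

definition poset_species ::
  "('e set \<Rightarrow> 'a set) \<Rightarrow> ('e set \<Rightarrow> 'a \<Rightarrow> 'a \<Rightarrow> bool) \<Rightarrow> 'a
   \<Rightarrow> (('e \<Rightarrow> 'e) \<Rightarrow> 'e set \<Rightarrow> 'a \<Rightarrow> 'a) \<Rightarrow> bool" where
  "poset_species H le one rel \<longleftrightarrow>
     (\<forall>I. finite I \<longrightarrow>
        (\<forall>x\<in>H I. le I x x) \<and>
        (\<forall>x\<in>H I. \<forall>y\<in>H I. le I x y \<and> le I y x \<longrightarrow> x = y) \<and>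
        (\<forall>x\<in>H I. \<forall>y\<in>H I. \<forall>z\<in>H I. le I x y \<and> le I y z \<longrightarrow> le I x z) \<and>
        (\<forall>x\<in>H I. \<forall>y\<in>H I. finite {z\<in>H I. le I x z \<and> le I z y})) \<and>
     H {} = {one} \<and>
     (\<forall>s I. finite I \<and> inj_on s I \<longrightarrow>
        bij_betw (rel s I) (H I) (H (s ` I)) \<and>
        (\<forall>x\<in>H I. \<forall>y\<in>H I. le I x y \<longrightarrow> le (s ` I) (rel s I x) (rel s I y))) \<and>
     (\<forall>I. \<forall>x\<in>H I. finite I \<longrightarrow> rel id I x = x) \<and>
     (\<forall>s t I. \<forall>x\<in>H I. finite I \<and> inj_on s I \<and> inj_on t (s ` I) \<longrightarrow>
        rel (t \<circ> s) I x = rel t (s ` I) (rel s I x)) \<and>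
     (\<forall>s t I. \<forall>x\<in>H I. finite I \<and> (\<forall>i\<in>I. s i = t i) \<longrightarrow> rel s I x = rel t I x)"

definition poset_hopf_monoid ::
  "('e set \<Rightarrow> 'a set) \<Rightarrow> ('e set \<Rightarrow> 'a \<Rightarrow> 'a \<Rightarrow> bool) \<Rightarrow> 'a
   \<Rightarrow> (('e \<Rightarrow> 'e) \<Rightarrow> 'e set \<Rightarrow> 'a \<Rightarrow> 'a)
   \<Rightarrow> ('e set \<Rightarrow> 'e set \<Rightarrow> 'a \<Rightarrow> 'a \<Rightarrow> 'a)
   \<Rightarrow> ('e set \<Rightarrow> 'e set \<Rightarrow> 'a \<Rightarrow> 'a \<times> 'a) \<Rightarrow> bool" where
  "poset_hopf_monoid H le one rel m D \<longleftrightarrow>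
     poset_species H le one rel \<and>
     (\<forall>S T. finite S \<and> finite T \<and> S \<inter> T = {} \<longrightarrow>
        (\<forall>x\<in>H S. \<forall>y\<in>H T. m S T x y \<in> H (S \<union> T)) \<and>
        (\<forall>x\<in>H S. \<forall>y\<in>H T. \<forall>x'\<in>H S. \<forall>y'\<in>H T. le S x x' \<and> le T y y' \<longrightarrow>
            le (S \<union> T) (m S T x y) (m S T x' y')) \<and>
        (\<forall>z\<in>H (S \<union> T). fst (D S T z) \<in> H S \<and> snd (D S T z) \<in> H T) \<and>
        (\<forall>z\<in>H (S \<union> T). \<forall>z'\<in>H (S \<union> T). le (S \<union> T) z z' \<longrightarrow>
            le S (fst (D S T z)) (fst (D S T z')) \<and> le T (snd (D S T z)) (snd (D S T z'))) \<and>
        (\<forall>s. inj_on s (S \<union> T) \<longrightarrow>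
            (\<forall>x\<in>H S. \<forall>y\<in>H T. rel s (S \<union> T) (m S T x y)
                = m (s ` S) (s ` T) (rel s S x) (rel s T y)) \<and>
            (\<forall>z\<in>H (S \<union> T). D (s ` S) (s ` T) (rel s (S \<union> T) z)
                = (rel s S (fst (D S T z)), rel s T (snd (D S T z)))))) \<and>
     (\<forall>I. \<forall>x\<in>H I. finite I \<longrightarrow> m {} I one x = x \<and> m I {} x one = x) \<and>
     (\<forall>I. \<forall>x\<in>H I. finite I \<longrightarrow> D {} I x = (one, x) \<and> D I {} x = (x, one)) \<and>
     (\<forall>R S T. finite R \<and> finite S \<and> finite T \<and> R \<inter> S = {} \<and> R \<inter> T = {} \<and> S \<inter> T = {} \<longrightarrow>
        (\<forall>x\<in>H R. \<forall>y\<in>H S. \<forall>z\<in>H T.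
            m (R \<union> S) T (m R S x y) z = m R (S \<union> T) x (m S T y z)) \<and>
        (\<forall>w\<in>H (R \<union> S \<union> T).
            fst (D R S (fst (D (R \<union> S) T w))) = fst (D R (S \<union> T) w) \<and>
            snd (D R S (fst (D (R \<union> S) T w))) = fst (D S T (snd (D R (S \<union> T) w))) \<and>
            snd (D (R \<union> S) T w) = snd (D S T (snd (D R (S \<union> T) w))))) \<and>
     (\<forall>S1 S2 T1 T2. finite S1 \<and> finite S2 \<and> S1 \<inter> S2 = {} \<and> T1 \<inter> T2 = {} \<and>
          S1 \<union> S2 = T1 \<union> T2 \<longrightarrow>
        (\<forall>x\<in>H S1. \<forall>y\<in>H S2.
           D T1 T2 (m S1 S2 x y) =
             (m (S1 \<inter> T1) (S2 \<inter> T1) (fst (D (S1 \<inter> T1) (S1 \<inter> T2) x)) (fst (D (S2 \<inter> T1) (S2 \<inter> T2) y)),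
              m (S1 \<inter> T2) (S2 \<inter> T2) (snd (D (S1 \<inter> T1) (S1 \<inter> T2) x)) (snd (D (S2 \<inter> T1) (S2 \<inter> T2) y)))))"

text \<open>Self-adjointness: m_{S,T} and D_{S,T} form a Galois connection (with the product order
  on H[S] x H[T]) for all S, T, uniformly either with m left adjoint or with D left adjoint.\<close>

definition self_adjoint ::
  "('e set \<Rightarrow> 'a set) \<Rightarrow> ('e set \<Rightarrow> 'a \<Rightarrow> 'a \<Rightarrow> bool)
   \<Rightarrow> ('e set \<Rightarrow> 'e set \<Rightarrow> 'a \<Rightarrow> 'a \<Rightarrow> 'a)
   \<Rightarrow> ('e set \<Rightarrow> 'e set \<Rightarrow> 'a \<Rightarrow> 'a \<times> 'a) \<Rightarrow> bool" where
  "self_adjoint H le m D \<longleftrightarrow>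
     (\<forall>S T. finite S \<and> finite T \<and> S \<inter> T = {} \<longrightarrow>
        (\<forall>x\<in>H S. \<forall>y\<in>H T. \<forall>z\<in>H (S \<union> T).
           le (S \<union> T) (m S T x y) z \<longleftrightarrow>
           le S x (fst (D S T z)) \<and> le T y (snd (D S T z)))) \<or>
     (\<forall>S T. finite S \<and> finite T \<and> S \<inter> T = {} \<longrightarrow>
        (\<forall>x\<in>H S. \<forall>y\<in>H T. \<forall>z\<in>H (S \<union> T).
           le S (fst (D S T z)) x \<and> le T (snd (D S T z)) y \<longleftrightarrow>
           le (S \<union> T) z (m S T x y)))"

text \<open>Linearization kH.  kH[I] = finitely supported k-valued functions on H[I];
  kH[S] \<otimes> kH[T] is identified with finitely supported functions on H[S] x H[T]
  (the free vector space on the product of the bases).  The multiplication and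
  comultiplication of kH are the linear extensions of m and D.\<close>

definition finsupp_on :: "'b set \<Rightarrow> ('b \<Rightarrow> 'k::zero) \<Rightarrow> bool" where
  "finsupp_on A f \<longleftrightarrow> finite {p. f p \<noteq> 0} \<and> {p. f p \<noteq> 0} \<subseteq> A"

definition lin_mult ::
  "('e set \<Rightarrow> 'a set) \<Rightarrow> ('e set \<Rightarrow> 'e set \<Rightarrow> 'a \<Rightarrow> 'a \<Rightarrow> 'a)
   \<Rightarrow> 'e set \<Rightarrow> 'e set \<Rightarrow> ('a \<times> 'a \<Rightarrow> 'k::field) \<Rightarrow> 'a \<Rightarrow> 'k" where
  "lin_mult H m S T F z =
     (\<Sum>p\<in>{p\<in>H S \<times> H T. F p \<noteq> 0 \<and> m S T (fst p) (snd p) = z}. F p)"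

definition lin_comult ::
  "('e set \<Rightarrow> 'a set) \<Rightarrow> ('e set \<Rightarrow> 'e set \<Rightarrow> 'a \<Rightarrow> 'a \<times> 'a)
   \<Rightarrow> 'e set \<Rightarrow> 'e set \<Rightarrow> ('a \<Rightarrow> 'k::field) \<Rightarrow> 'a \<times> 'a \<Rightarrow> 'k" where
  "lin_comult H D S T f p =
     (\<Sum>z\<in>{z\<in>H (S \<union> T). f z \<noteq> 0 \<and> D S T z = p}. f z)"

definition lin_commutative ::
  "'k::field itself \<Rightarrow> ('e set \<Rightarrow> 'a set) \<Rightarrow> ('e set \<Rightarrow> 'e set \<Rightarrow> 'a \<Rightarrow> 'a \<Rightarrow> 'a) \<Rightarrow> bool" where
  "lin_commutative _ H m \<longleftrightarrow>
     (\<forall>S T (F :: 'a \<times> 'a \<Rightarrow> 'k). finite S \<and> finite T \<and> S \<inter> T = {} \<and> finsupp_on (H S \<times> H T) F \<longrightarrow>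
        lin_mult H m S T F = lin_mult H m T S (F \<circ> prod.swap))"

definition lin_cocommutative ::
  "'k::field itself \<Rightarrow> ('e set \<Rightarrow> 'a set) \<Rightarrow> ('e set \<Rightarrow> 'e set \<Rightarrow> 'a \<Rightarrow> 'a \<times> 'a) \<Rightarrow> bool" where
  "lin_cocommutative _ H D \<longleftrightarrow>
     (\<forall>S T (f :: 'a \<Rightarrow> 'k). finite S \<and> finite T \<and> S \<inter> T = {} \<and> finsupp_on (H (S \<union> T)) f \<longrightarrow>
        lin_comult H D S T f = lin_comult H D T S f \<circ> prod.swap)"

end

theory Submission
  imports Defs
begin

text \<open>Compatibility with S1 = T2 = S and S2 = T1 = T, together with the unit laws, gives
  D T S (m S T x y) = (y, x).  If m is left adjoint to D, then m S T x y \<le> z iff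
  (x, y) \<le> D S T z; taking z = m T S y x shows m S T x y \<le> m T S y x, and by symmetry
  m is commutative.  The adjunction then says that D S T z and the swap of D T S z have the
  same elements below them, so they coincide.  If instead D is left adjoint to m, the same
  argument runs in the opposite posets.  Linearization preserves both identities because the
  swap is a bijection of the bases.\<close>

lemma poset_species_refl:
  assumes "poset_species H le one rel" "finite I" "x \<in> H I"
  shows "le I x x"
  using conjunct1[OF assms(1)[unfolded poset_species_def], rule_format, OF assms(2)] assms(3)
  by blast

lemma poset_species_antisym:
  assumes "poset_species H le one rel" "finite I" "x \<in> H I" "y \<in> H I" "le I x y" "le I y x"
  shows "x = y"
  using conjunct1[OF assms(1)[unfolded poset_species_def], rule_format, OF assms(2)] assms(3-)
  by blast

lemma
  assumes "poset_hopf_monoid H le one rel m D"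
  shows poset_hopf_monoid_species: "poset_species H le one rel"
    and poset_hopf_monoid_mult_closed:
      "\<lbrakk>finite S; finite T; S \<inter> T = {}; x \<in> H S; y \<in> H T\<rbrakk> \<Longrightarrow> m S T x y \<in> H (S \<union> T)"
    and poset_hopf_monoid_comult_closed:
      "\<lbrakk>finite S; finite T; S \<inter> T = {}; z \<in> H (S \<union> T)\<rbrakk> \<Longrightarrow>
        fst (D S T z) \<in> H S \<and> snd (D S T z) \<in> H T"
    and poset_hopf_monoid_mult_unit:
      "\<lbrakk>finite I; x \<in> H I\<rbrakk> \<Longrightarrow> m {} I one x = x \<and> m I {} x one = x"
    and poset_hopf_monoid_comult_unit:
      "\<lbrakk>finite I; x \<in> H I\<rbrakk> \<Longrightarrow> D {} I x = (one, x) \<and> D I {} x = (x, one)"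
    and poset_hopf_monoid_compatible:
      "\<lbrakk>finite S1; finite S2; S1 \<inter> S2 = {}; T1 \<inter> T2 = {}; S1 \<union> S2 = T1 \<union> T2;
        x \<in> H S1; y \<in> H S2\<rbrakk> \<Longrightarrow>
       D T1 T2 (m S1 S2 x y) =
         (m (S1 \<inter> T1) (S2 \<inter> T1) (fst (D (S1 \<inter> T1) (S1 \<inter> T2) x)) (fst (D (S2 \<inter> T1) (S2 \<inter> T2) y)),
          m (S1 \<inter> T2) (S2 \<inter> T2) (snd (D (S1 \<inter> T1) (S1 \<inter> T2) x)) (snd (D (S2 \<inter> T1) (S2 \<inter> T2) y)))"
proof -
  note axioms = assms[unfolded poset_hopf_monoid_def]
  note structure_maps = conjunct1[OF conjunct2[OF axioms]]
  show "poset_species H le one rel"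
    using axioms by (rule conjunct1)
  show "\<lbrakk>finite S; finite T; S \<inter> T = {}; x \<in> H S; y \<in> H T\<rbrakk> \<Longrightarrow> m S T x y \<in> H (S \<union> T)"
    using structure_maps by (elim allE[of _ S] allE[of _ T]) simp
  show "\<lbrakk>finite S; finite T; S \<inter> T = {}; z \<in> H (S \<union> T)\<rbrakk> \<Longrightarrow>
      fst (D S T z) \<in> H S \<and> snd (D S T z) \<in> H T"
    using structure_maps by (elim allE[of _ S] allE[of _ T]) simp
  show "\<lbrakk>finite I; x \<in> H I\<rbrakk> \<Longrightarrow> m {} I one x = x \<and> m I {} x one = x"
    using conjunct1[OF conjunct2[OF conjunct2[OF axioms]]] by blast
  show "\<lbrakk>finite I; x \<in> H I\<rbrakk> \<Longrightarrow> D {} I x = (one, x) \<and> D I {} x = (x, one)"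
    using conjunct1[OF conjunct2[OF conjunct2[OF conjunct2[OF axioms]]]] by blast
  show "\<lbrakk>finite S1; finite S2; S1 \<inter> S2 = {}; T1 \<inter> T2 = {}; S1 \<union> S2 = T1 \<union> T2;
        x \<in> H S1; y \<in> H S2\<rbrakk> \<Longrightarrow>
       D T1 T2 (m S1 S2 x y) =
         (m (S1 \<inter> T1) (S2 \<inter> T1) (fst (D (S1 \<inter> T1) (S1 \<inter> T2) x)) (fst (D (S2 \<inter> T1) (S2 \<inter> T2) y)),
          m (S1 \<inter> T2) (S2 \<inter> T2) (snd (D (S1 \<inter> T1) (S1 \<inter> T2) x)) (snd (D (S2 \<inter> T1) (S2 \<inter> T2) y)))"
    using conjunct2[OF conjunct2[OF conjunct2[OF conjunct2[OF conjunct2[OF axioms]]]]]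
    by (elim allE[of _ S1] allE[of _ S2] allE[of _ T1] allE[of _ T2]) simp
qed

lemma poset_hopf_monoid_comult_mult_swap:
  assumes hm: "poset_hopf_monoid H le one rel m D"
    and fin: "finite S" "finite T" and disj: "S \<inter> T = {}" and xy: "x \<in> H S" "y \<in> H T"
  shows "D T S (m S T x y) = (y, x)"
proof -
  have disj': "T \<inter> S = {}" and "S \<union> T = T \<union> S"
    using disj by blast+
  then have "D T S (m S T x y) =
      (m (S \<inter> T) (T \<inter> T) (fst (D (S \<inter> T) (S \<inter> S) x)) (fst (D (T \<inter> T) (T \<inter> S) y)),
       m (S \<inter> S) (T \<inter> S) (snd (D (S \<inter> T) (S \<inter> S) x)) (snd (D (T \<inter> T) (T \<inter> S) y)))"
    using poset_hopf_monoid_compatible[OF hm fin disj disj' _ xy] by blast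
  also have "\<dots> = (m {} T one y, m S {} x one)"
    using poset_hopf_monoid_comult_unit[OF hm] fin xy disj disj' by simp
  also have "\<dots> = (y, x)"
    using poset_hopf_monoid_mult_unit[OF hm] fin xy by simp
  finally show ?thesis .
qed

definition mult_left_adjoint ::
  "('e set \<Rightarrow> 'a set) \<Rightarrow> ('e set \<Rightarrow> 'a \<Rightarrow> 'a \<Rightarrow> bool)
   \<Rightarrow> ('e set \<Rightarrow> 'e set \<Rightarrow> 'a \<Rightarrow> 'a \<Rightarrow> 'a)
   \<Rightarrow> ('e set \<Rightarrow> 'e set \<Rightarrow> 'a \<Rightarrow> 'a \<times> 'a) \<Rightarrow> bool" where
  "mult_left_adjoint H le m D \<longleftrightarrow>
     (\<forall>S T. finite S \<and> finite T \<and> S \<inter> T = {} \<longrightarrow>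
        (\<forall>x\<in>H S. \<forall>y\<in>H T. \<forall>z\<in>H (S \<union> T).
           le (S \<union> T) (m S T x y) z \<longleftrightarrow>
           le S x (fst (D S T z)) \<and> le T y (snd (D S T z))))"

lemma mult_left_adjointD:
  "\<lbrakk>mult_left_adjoint H le m D; finite S; finite T; S \<inter> T = {};
    x \<in> H S; y \<in> H T; z \<in> H (S \<union> T)\<rbrakk> \<Longrightarrow>
   le (S \<union> T) (m S T x y) z \<longleftrightarrow> le S x (fst (D S T z)) \<and> le T y (snd (D S T z))"
  by (simp add: mult_left_adjoint_def)

lemma self_adjoint_iff_mult_left_adjoint:
  "self_adjoint H le m D \<longleftrightarrow>
     mult_left_adjoint H le m D \<or> mult_left_adjoint H (\<lambda>I x y. le I y x) m D"
  unfolding self_adjoint_def mult_left_adjoint_def by (simp add: eq_commute)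

lemma self_adjoint_obtains_mult_left_adjoint:
  assumes "poset_species H le one rel" "self_adjoint H le m D"
  obtains leq where "mult_left_adjoint H leq m D"
    and "\<And>I x. finite I \<Longrightarrow> x \<in> H I \<Longrightarrow> leq I x x"
    and "\<And>I x y. \<lbrakk>finite I; x \<in> H I; y \<in> H I; leq I x y; leq I y x\<rbrakk> \<Longrightarrow> x = y"
  using assms(2) unfolding self_adjoint_iff_mult_left_adjoint
proof
  assume "mult_left_adjoint H le m D"
  then show thesis
    using that poset_species_refl[OF assms(1)] poset_species_antisym[OF assms(1)] by blast
next
  assume "mult_left_adjoint H (\<lambda>I x y. le I y x) m D"
  then show thesis
    using that poset_species_refl[OF assms(1)] poset_species_antisym[OF assms(1)] by blast
qed

context
  fixes H :: "'e set \<Rightarrow> 'a set" and le leq :: "'e set \<Rightarrow> 'a \<Rightarrow> 'a \<Rightarrow> bool"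
    and one rel m D
  assumes hm: "poset_hopf_monoid H le one rel m D"
    and adj: "mult_left_adjoint H leq m D"
    and leq_refl: "\<And>I x. finite I \<Longrightarrow> x \<in> H I \<Longrightarrow> leq I x x"
    and leq_antisym: "\<And>I x y. \<lbrakk>finite I; x \<in> H I; y \<in> H I; leq I x y; leq I y x\<rbrakk> \<Longrightarrow> x = y"
begin

lemma mult_left_adjoint_mult_commute:
  assumes fin: "finite S" "finite T" and disj: "S \<inter> T = {}" and xy: "x \<in> H S" "y \<in> H T"
  shows "m S T x y = m T S y x"
proof -
  have disj': "T \<inter> S = {}" and TS: "T \<union> S = S \<union> T"
    using disj by blast+
  have mxy: "m S T x y \<in> H (S \<union> T)" and myx: "m T S y x \<in> H (S \<union> T)"
    using poset_hopf_monoid_mult_closed[OF hm fin disj xy]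
      poset_hopf_monoid_mult_closed[OF hm fin(2,1) disj' xy(2,1)] TS by simp_all
  have refl: "leq S x x" "leq T y y"
    using leq_refl fin xy by blast+
  have "leq (S \<union> T) (m S T x y) (m T S y x)"
    using mult_left_adjointD[OF adj fin disj xy myx] refl
      poset_hopf_monoid_comult_mult_swap[OF hm fin(2,1) disj' xy(2,1)] by simp
  moreover have "leq (S \<union> T) (m T S y x) (m S T x y)"
    using mult_left_adjointD[OF adj fin(2,1) disj' xy(2,1)] mxy refl TS
      poset_hopf_monoid_comult_mult_swap[OF hm fin disj xy] by simp
  ultimately show ?thesis
    using leq_antisym fin mxy myx by blast
qed

lemma mult_left_adjoint_comult_commute:
  assumes fin: "finite S" "finite T" and disj: "S \<inter> T = {}" and z: "z \<in> H (S \<union> T)"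
  shows "D S T z = prod.swap (D T S z)"
proof -
  have disj': "T \<inter> S = {}" and TS: "T \<union> S = S \<union> T"
    using disj by blast+
  have z': "z \<in> H (T \<union> S)"
    using z TS by simp
  obtain a b where ab: "D S T z = (a, b)"
    by fastforce
  obtain c d where cd: "D T S z = (c, d)"
    by fastforce
  have in_H: "a \<in> H S" "b \<in> H T" "c \<in> H T" "d \<in> H S"
    using poset_hopf_monoid_comult_closed[OF hm fin disj z]
      poset_hopf_monoid_comult_closed[OF hm fin(2,1) disj' z'] ab cd by auto
  have same_lower: "leq S x a \<and> leq T y b \<longleftrightarrow> leq S x d \<and> leq T y c"
    if "x \<in> H S" "y \<in> H T" for x y
  proof -
    have "leq S x a \<and> leq T y b \<longleftrightarrow> leq (S \<union> T) (m S T x y) z"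
      using mult_left_adjointD[OF adj fin disj that z] ab by simp
    also have "\<dots> \<longleftrightarrow> leq (S \<union> T) (m T S y x) z"
      using mult_left_adjoint_mult_commute[OF fin disj that] by simp
    also have "\<dots> \<longleftrightarrow> leq S x d \<and> leq T y c"
      using mult_left_adjointD[OF adj fin(2,1) disj' that(2,1)] z TS cd by auto
    finally show ?thesis .
  qed
  have "a = d" "b = c"
    using same_lower[of a b] same_lower[of d c] in_H leq_refl leq_antisym fin by meson+
  then show ?thesis
    using ab cd by simp
qed

end

lemma lin_mult_swap:
  assumes "\<And>x y. x \<in> H S \<Longrightarrow> y \<in> H T \<Longrightarrow> m S T x y = m T S y x"
  shows "lin_mult H m S T F = lin_mult H m T S (F \<circ> prod.swap)"
proof
  fix z
  let ?P = "{p \<in> H S \<times> H T. F p \<noteq> 0 \<and> m S T (fst p) (snd p) = z}"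
  have "{p \<in> H T \<times> H S. (F \<circ> prod.swap) p \<noteq> 0 \<and> m T S (fst p) (snd p) = z} = prod.swap ` ?P"
    using assms by (auto simp: image_iff)
  then show "lin_mult H m S T F z = lin_mult H m T S (F \<circ> prod.swap) z"
    unfolding lin_mult_def by (simp add: sum.reindex)
qed

lemma lin_comult_swap:
  assumes "\<And>z. z \<in> H (S \<union> T) \<Longrightarrow> D S T z = prod.swap (D T S z)"
  shows "lin_comult H D S T f = lin_comult H D T S f \<circ> prod.swap"
proof
  fix p
  have "{z \<in> H (S \<union> T). f z \<noteq> 0 \<and> D S T z = p} = {z \<in> H (T \<union> S). f z \<noteq> 0 \<and> D T S z = prod.swap p}"
    using assms by (auto simp: Un_commute)
  then show "lin_comult H D S T f p = (lin_comult H D T S f \<circ> prod.swap) p"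
    unfolding lin_comult_def by simp
qed

theorem mainTheorem10:
  fixes H :: "'e set \<Rightarrow> 'a set" and le :: "'e set \<Rightarrow> 'a \<Rightarrow> 'a \<Rightarrow> bool" and one :: 'a
    and rel :: "('e \<Rightarrow> 'e) \<Rightarrow> 'e set \<Rightarrow> 'a \<Rightarrow> 'a"
    and m :: "'e set \<Rightarrow> 'e set \<Rightarrow> 'a \<Rightarrow> 'a \<Rightarrow> 'a"
    and D :: "'e set \<Rightarrow> 'e set \<Rightarrow> 'a \<Rightarrow> 'a \<times> 'a"
  assumes "poset_hopf_monoid H le one rel m D"
    and "self_adjoint H le m D"
  shows "lin_commutative TYPE('k::field_char_0) H m \<and> lin_cocommutative TYPE('k) H D"
proof -
  obtain leq where adj: "mult_left_adjoint H leq m D"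
    and refl: "\<And>I x. finite I \<Longrightarrow> x \<in> H I \<Longrightarrow> leq I x x"
    and antisym: "\<And>I x y. \<lbrakk>finite I; x \<in> H I; y \<in> H I; leq I x y; leq I y x\<rbrakk> \<Longrightarrow> x = y"
    using self_adjoint_obtains_mult_left_adjoint[OF poset_hopf_monoid_species[OF assms(1)] assms(2)]
    by metis
  note commute = mult_left_adjoint_mult_commute[OF assms(1) adj refl antisym]
    and cocommute = mult_left_adjoint_comult_commute[OF assms(1) adj refl antisym]
  have "lin_commutative TYPE('k) H m"
    unfolding lin_commutative_def by (intro allI impI lin_mult_swap) (auto intro: commute)
  moreover have "lin_cocommutative TYPE('k) H D"
    unfolding lin_cocommutative_def by (intro allI impI lin_comult_swap) (auto intro: cocommute)
  ultimately show ?thesis ..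
qed

end
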